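(* Let $P$ be a monic polynomial of degree $\ge1$ such that $\Omega:=\{z\in\mathbb C:|P(z)|<1\}$ is a Jordan domain which is also a quadrature domain. Then $\Omega$ is a disk.
   Context: A Jordan domain $\Omega$ with boundary $\Gamma$ is called a quadrature domain if there is a function $S$ meromorphic in $\Omega$ with finitely many poles, extending continuously to $\Gamma$, such that $S(z)=\bar z$ for $z\in\Gamma$ ($S$ is the Schwarz function of $\Gamma$); the order of $\Omega$ is the number of poles of $S$ in $\Omega$, counted with multiplicity. *)

theory Defs
  imports "HOL-Complex_Analysis.Complex_Analysis" "HOL-Computational_Algebra.Polynomial"
begin

definition jordan_domain :: "complex set \<Rightarrow> bool" where
  "jordan_domain \<Omega> \<longleftrightarrow>
     (\<exists>\<gamma>::real \<Rightarrow> complex. simple_path \<gamma> \<and> pathfinish \<gamma> = pathstart \<gamma> \<and>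
        \<Omega> = inside (path_image \<gamma>))"

text \<open>Quadrature domain: a Jordan domain admitting a Schwarz function, i.e. a function
  meromorphic in the domain with finitely many poles, extending continuously to the
  boundary, and equal to the complex conjugate on the boundary.\<close>
definition quadrature_domain :: "complex set \<Rightarrow> bool" where
  "quadrature_domain \<Omega> \<longleftrightarrow> jordan_domain \<Omega> \<and>
     (\<exists>S::complex \<Rightarrow> complex. \<exists>A. finite A \<and> A \<subseteq> \<Omega> \<and>
        S holomorphic_on (\<Omega> - A) \<and> (\<forall>a\<in>A. is_pole S a) \<and>
        continuous_on (closure \<Omega> - A) S \<and>
        (\<forall>z\<in>frontier \<Omega>. S z = cnj z))"

end

theory Submission
  imports Defs "HOL-Computational_Algebra.Fundamental_Theorem_Algebra"
begin

(* Write P* = map_poly cnj P and n = degree P. On the boundary of Omega we have |P| = 1 and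
   S z = cnj z, hence P(z) P*(S z) = |P(z)|^2 = 1. Multiplied by a polynomial vanishing to high
   order at the poles of S, the function P(z) P*(S z) - 1 becomes holomorphic in Omega, continuous
   up to the boundary and zero there, so by the maximum modulus principle P(z) P*(S z) = 1 in
   Omega. Consequently every zero a of P is a pole of S, where |S z| >= c / |z - a|; as P* has
   degree n, |P(z)| = 1 / |P*(S z)| = O(|z - a|^n), so a is a zero of order n and P = (z - a)^n. *)

lemma poly_norm_ge_at_infinity:
  fixes p :: "'a::real_normed_field poly"
  assumes "p \<noteq> 0"
  shows "\<forall>\<^sub>F x in at_infinity. norm (lead_coeff p) / 2 * norm x ^ degree p \<le> norm (poly p x)"
proof -
  have "((\<lambda>x. norm (poly p x / x ^ degree p)) \<longlongrightarrow> norm (lead_coeff p)) at_infinity"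
    by (intro tendsto_norm poly_divide_tendsto_aux)
  then have "\<forall>\<^sub>F x in at_infinity. norm (lead_coeff p) / 2 < norm (poly p x / x ^ degree p)"
    using assms by (intro order_tendstoD(1)) auto
  moreover have "\<forall>\<^sub>F x in at_infinity. x \<noteq> 0"
    by (rule eventually_at_infinityI[of 1]) auto
  ultimately show ?thesis
    by eventually_elim (simp add: norm_divide norm_power field_simps)
qed

lemma bounded_poly_sublevel:
  fixes p :: "complex poly"
  assumes "degree p > 0"
  shows "bounded {z. norm (poly p z) < c}"
proof -
  have "\<forall>\<^sub>F z in at_infinity. c \<le> norm (poly p z)"
    using filterlim_poly_at_infinity[OF assms]
    by (auto simp: filterlim_at_infinity_conv_norm_at_top filterlim_at_top)
  then obtain R where "\<And>z. R \<le> norm z \<Longrightarrow> c \<le> norm (poly p z)"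
    by (auto simp: eventually_at_infinity)
  then have "{z. norm (poly p z) < c} \<subseteq> cball 0 R"
    by (smt (verit) mem_Collect_eq mem_cball_0 subsetI)
  then show ?thesis
    using bounded_cball bounded_subset by blast
qed

lemma frontier_sublevel_subset:
  fixes f :: "'a::topological_space \<Rightarrow> real"
  assumes "continuous_on UNIV f"
  shows "frontier {x. f x < c} \<subseteq> {x. f x = c}"
proof -
  have "open {x. f x < c}"
    using assms by (intro open_Collect_less continuous_intros) (auto simp: continuous_on_eq_continuous_at)
  moreover have "closure {x. f x < c} \<subseteq> {x. f x \<le> c}"
    using assms by (intro closure_minimal closed_Collect_le continuous_intros) (auto simp: continuous_on_eq_continuous_at)
  ultimately show ?thesis
    by (auto simp: frontier_def interior_open)
qed

lemma order_ge_of_norm_bound: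
  fixes p :: "complex poly"
  assumes "p \<noteq> 0"
    and bound: "\<forall>\<^sub>F w in at a. norm (poly p w) \<le> C * norm (w - a) ^ n"
  shows "n \<le> order a p"
proof (rule ccontr)
  define m where "m = order a p"
  assume "\<not> n \<le> order a p"
  then have "m < n" by (simp add: m_def)
  obtain q where pq: "p = [:- a, 1:] ^ m * q" and "\<not> [:- a, 1:] dvd q"
    using order_decomp[OF assms(1)] m_def by blast
  then have "poly q a \<noteq> 0"
    by (simp add: poly_eq_0_iff_dvd)
  have "\<forall>\<^sub>F w in at a. norm (poly q w) \<le> C * norm (w - a) ^ (n - m)"
    using bound eventually_neq_at_within[of a a UNIV]
  proof eventually_elim
    case (elim w)
    have "norm (w - a) ^ m * norm (poly q w) = norm (poly p w)"
      by (simp add: pq poly_mult poly_power norm_mult norm_power)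
    also have "\<dots> \<le> norm (w - a) ^ m * (C * norm (w - a) ^ (n - m))"
      using elim(1) \<open>m < n\<close> by (simp add: mult_ac flip: power_add)
    finally show ?case
      using elim(2) by simp
  qed
  moreover have "((\<lambda>w. C * norm (w - a) ^ (n - m)) \<longlongrightarrow> 0) (at a)"
    using \<open>m < n\<close> by (auto intro!: tendsto_eq_intros)
  ultimately have "(poly q \<longlongrightarrow> 0) (at a)"
    by (rule Lim_null_comparison)
  moreover have "(poly q \<longlongrightarrow> poly q a) (at a)"
    by (rule poly_isCont[unfolded isCont_def])
  ultimately show False
    using \<open>poly q a \<noteq> 0\<close> tendsto_unique[OF at_neq_bot] by blast
qed

lemma monic_eq_linear_power_if_degree_le_order:
  fixes p :: "'a::idom poly"
  assumes "lead_coeff p = 1" "degree p \<le> order a p"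
  shows "p = [:- a, 1:] ^ degree p"
proof -
  define m where "m = order a p"
  have "p \<noteq> 0"
    using assms(1) by auto
  then obtain q where pq: "p = [:- a, 1:] ^ m * q"
    using order_decomp m_def by blast
  with \<open>p \<noteq> 0\<close> have "q \<noteq> 0"
    by auto
  then have "degree p = m + degree q"
    unfolding pq by (simp add: degree_mult_eq degree_linear_power)
  with assms(2) have "degree q = 0" "m = degree p"
    by (auto simp: m_def)
  moreover have "lead_coeff q = 1"
    using assms(1) unfolding pq by (simp add: lead_coeff_mult lead_coeff_power)
  ultimately have "q = 1"
    by (metis coeff_pCons_0 degree_eq_zeroE one_pCons)
  with pq \<open>m = degree p\<close> show ?thesis
    by simp
qed

lemma sublevel_linear_power_eq_ball:
  fixes a :: complex
  assumes "n > 0"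
  shows "{z. norm (poly ([:- a, 1:] ^ n) z) < 1} = ball a 1"
  using assms by (auto simp: norm_power power_less_one_iff dist_norm norm_minus_commute)

lemma pole_factorization:
  assumes "S holomorphic_on U - {a}" "open U" "a \<in> U" "is_pole S a"
  obtains k g where "k > 0" "isCont g a" "g a \<noteq> 0" "\<forall>\<^sub>F w in at a. S w = g w / (w - a) ^ k"
proof -
  obtain r where "zorder S a < 0" "zor_poly S a a \<noteq> 0" "r > 0"
    "zor_poly S a holomorphic_on cball a r"
    "\<forall>w\<in>cball a r - {a}. S w = zor_poly S a w / (w - a) ^ nat (- zorder S a)"
    using zorder_exist_pole[OF assms] by blast
  moreover from this have "isCont (zor_poly S a) a"
    by (intro continuous_on_interior[of "cball a r"] holomorphic_on_imp_continuous_on) auto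
  moreover from calculation have "\<forall>\<^sub>F w in at a. S w = zor_poly S a w / (w - a) ^ nat (- zorder S a)"
    using eventually_at_in_open[of "ball a r" a]
    by (auto elim!: eventually_mono)
  ultimately show ?thesis
    using that[of "nat (- zorder S a)"] by auto
qed

lemma pole_norm_ge:
  assumes "S holomorphic_on U - {a}" "open U" "a \<in> U" "is_pole S a"
  obtains c where "c > 0" "\<forall>\<^sub>F w in at a. c / norm (w - a) \<le> norm (S w)"
proof -
  obtain k g where "k > 0" "isCont g a" "g a \<noteq> 0" and S: "\<forall>\<^sub>F w in at a. S w = g w / (w - a) ^ k"
    using pole_factorization[OF assms] .
  have "((\<lambda>w. norm (g w)) \<longlongrightarrow> norm (g a)) (at a)"
    using \<open>isCont g a\<close> by (intro tendsto_norm) (simp add: isCont_def)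
  then have "\<forall>\<^sub>F w in at a. norm (g a) / 2 < norm (g w)"
    by (rule order_tendstoD(1)) (use \<open>g a \<noteq> 0\<close> in simp)
  moreover have "\<forall>\<^sub>F w in at a. w \<in> ball a 1 - {a}"
    by (rule eventually_at_in_open) auto
  ultimately have "\<forall>\<^sub>F w in at a. norm (g a) / 2 / norm (w - a) \<le> norm (S w)"
    using S
  proof eventually_elim
    case (elim w)
    then have d: "0 < norm (w - a)" "norm (w - a) < 1"
      by (auto simp: dist_norm norm_minus_commute)
    then have "norm (w - a) ^ k \<le> norm (w - a)"
      using power_decreasing[of 1 k "norm (w - a)"] \<open>k > 0\<close> d by simp
    then have "norm (g a) / 2 / norm (w - a) \<le> norm (g w) / norm (w - a) ^ k"
      using elim(1) d by (intro frac_le) simp_all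
    then show ?case
      using elim(3) by (simp add: norm_divide norm_power)
  qed
  from that[OF _ this] show ?thesis
    using \<open>g a \<noteq> 0\<close> by simp
qed

lemma tendsto_power_mult_poly_pole:
  fixes p :: "complex poly"
  assumes "S holomorphic_on U - {a}" "open U" "a \<in> U" "is_pole S a"
  obtains N where "\<And>M. N \<le> M \<Longrightarrow> ((\<lambda>w. (w - a) ^ M * poly p (S w)) \<longlongrightarrow> 0) (at a)"
proof -
  obtain k g where "k > 0" "isCont g a" and S: "\<forall>\<^sub>F w in at a. S w = g w / (w - a) ^ k"
    using pole_factorization[OF assms] .
  have "((\<lambda>w. (w - a) ^ M * poly p (S w)) \<longlongrightarrow> 0) (at a)" if "degree p * k < M" for M
  proof -
    have ik: "i * k < M" if "i \<le> degree p" for i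
      using \<open>degree p * k < M\<close> that by (meson le_less_trans mult_le_mono1)
    define F where "F w = (\<Sum>i\<le>degree p. coeff p i * g w ^ i * (w - a) ^ (M - i * k))" for w
    have "F a = 0"
      using ik by (auto simp: F_def intro!: sum.neutral)
    moreover have "(F \<longlongrightarrow> F a) (at a)"
      unfolding F_def using \<open>isCont g a\<close> by (intro tendsto_intros) (auto simp: isCont_def)
    ultimately have "(F \<longlongrightarrow> 0) (at a)"
      by simp
    moreover have "\<forall>\<^sub>F w in at a. F w = (w - a) ^ M * poly p (S w)"
      using S eventually_neq_at_within[of a a UNIV]
    proof eventually_elim
      case (elim w)
      have "(w - a) ^ M * (g w / (w - a) ^ k) ^ i = g w ^ i * (w - a) ^ (M - i * k)"
        if "i \<le> degree p" for i
      proof -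
        have "(w - a) ^ M = (w - a) ^ (k * i) * (w - a) ^ (M - i * k)"
          using ik[OF that] by (simp add: mult.commute flip: power_add)
        then show ?thesis
          using elim(2) by (simp add: power_divide field_simps flip: power_mult)
      qed
      then show ?case
        unfolding F_def poly_altdef elim(1) sum_distrib_left
        by (intro sum.cong) (auto simp: mult_ac)
    qed
    ultimately show ?thesis
      by (rule Lim_transform_eventually)
  qed
  then show ?thesis
    using that[of "Suc (degree p * k)"] by simp
qed

lemma eventually_at_notin_finite:
  fixes A :: "'a::t1_space set"
  assumes "finite A"
  shows "\<forall>\<^sub>F w in at z. w \<notin> A"
proof -
  have "\<forall>\<^sub>F w in at z. w \<in> - (A - {z}) - {z}"
    by (intro eventually_at_in_open open_Compl finite_imp_closed) (use assms in auto)
  then show ?thesis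
    by eventually_elim auto
qed

lemma holomorphic_on_zero_extension:
  fixes f :: "complex \<Rightarrow> complex"
  assumes "open \<Omega>" "finite A" "f holomorphic_on \<Omega> - A" "\<And>a. a \<in> A \<Longrightarrow> (f \<longlongrightarrow> 0) (at a)"
  shows "(\<lambda>w. if w \<in> A then 0 else f w) holomorphic_on \<Omega>"
proof (rule no_isolated_singularity'[OF _ _ assms(1,2)])
  show "((\<lambda>w. if w \<in> A then 0 else f w) \<longlongrightarrow> (if a \<in> A then 0 else f a)) (at a within \<Omega>)"
    if "a \<in> A" for a
  proof -
    have "\<forall>\<^sub>F w in at a. f w = (if w \<in> A then 0 else f w)"
      using eventually_at_notin_finite[OF assms(2)] by eventually_elim simp
    from Lim_transform_eventually[OF assms(4)[OF that] this]
    have "((\<lambda>w. if w \<in> A then 0 else f w) \<longlongrightarrow> 0) (at a within \<Omega>)"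
      by (rule tendsto_within_subset) simp
    with that show ?thesis
      by simp
  qed
  show "(\<lambda>w. if w \<in> A then 0 else f w) holomorphic_on \<Omega> - A"
    using assms(3) by (rule holomorphic_transform) simp
qed

lemma continuous_on_closure_zero_extension:
  fixes f :: "complex \<Rightarrow> complex"
  assumes "open \<Omega>" "finite A" "A \<subseteq> \<Omega>" "continuous_on (closure \<Omega> - A) f"
    and "(\<lambda>w. if w \<in> A then 0 else f w) holomorphic_on \<Omega>"
  shows "continuous_on (closure \<Omega>) (\<lambda>w. if w \<in> A then 0 else f w)"
proof -
  have U: "(closure \<Omega> - A) \<union> \<Omega> = closure \<Omega>"
    using closure_subset assms(3) by blast
  have "continuous_on ((closure \<Omega> - A) \<union> \<Omega>) (\<lambda>w. if w \<in> A then 0 else f w)"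
  proof (rule continuous_on_Un_local_open)
    have "open (- A)"
      using assms(2) by (intro open_Compl finite_imp_closed)
    from openin_open_Int[OF this, of "closure \<Omega>"]
    show "openin (top_of_set ((closure \<Omega> - A) \<union> \<Omega>)) (closure \<Omega> - A)"
      unfolding U by (simp add: Diff_eq)
    show "openin (top_of_set ((closure \<Omega> - A) \<union> \<Omega>)) \<Omega>"
      unfolding U using openin_open_Int[OF assms(1), of "closure \<Omega>"]
      by (simp add: Int_absorb1[OF closure_subset])
    show "continuous_on (closure \<Omega> - A) (\<lambda>w. if w \<in> A then 0 else f w)"
      using assms(4) by (rule continuous_on_eq) simp
    show "continuous_on \<Omega> (\<lambda>w. if w \<in> A then 0 else f w)"
      using assms(5) by (rule holomorphic_on_imp_continuous_on)
  qed
  then show ?thesis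
    by (simp only: U)
qed

lemma holomorphic_eq_0_if_eq_0_on_frontier:
  fixes f :: "complex \<Rightarrow> complex"
  assumes "open \<Omega>" "bounded \<Omega>" "f holomorphic_on \<Omega>" "continuous_on (closure \<Omega>) f"
    and "\<And>z. z \<in> frontier \<Omega> \<Longrightarrow> f z = 0" "z \<in> \<Omega>"
  shows "f z = 0"
proof -
  have "norm (f z) \<le> 0"
    by (rule maximum_modulus_frontier[of f \<Omega>]) (use assms in \<open>simp_all add: interior_open\<close>)
  then show ?thesis
    by simp
qed

lemma schwarz_function_poly_identity:
  fixes P :: "complex poly"
  assumes "open \<Omega>" "bounded \<Omega>" "finite A" "A \<subseteq> \<Omega>"
    and "S holomorphic_on \<Omega> - A" "\<And>a. a \<in> A \<Longrightarrow> is_pole S a" "continuous_on (closure \<Omega> - A) S"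
    and "\<And>z. z \<in> frontier \<Omega> \<Longrightarrow> S z = cnj z" "\<And>z. z \<in> frontier \<Omega> \<Longrightarrow> norm (poly P z) = 1"
    and "z \<in> \<Omega> - A"
  shows "poly P z * poly (map_poly cnj P) (S z) = 1"
proof -
  define Q where "Q = map_poly cnj P"
  have "\<exists>N. \<forall>M\<ge>N. ((\<lambda>w. (w - a) ^ M * poly Q (S w)) \<longlongrightarrow> 0) (at a)" if "a \<in> A" for a
  proof -
    have "S holomorphic_on (\<Omega> - (A - {a})) - {a}" "open (\<Omega> - (A - {a}))"
      using assms(1,3,5) by (auto intro: holomorphic_on_subset finite_imp_closed)
    then show ?thesis
      using tendsto_power_mult_poly_pole[of S _ a Q] that assms(4,6) by blast
  qed
  then obtain N where N: "\<And>a M. a \<in> A \<Longrightarrow> N a \<le> M \<Longrightarrow> ((\<lambda>w. (w - a) ^ M * poly Q (S w)) \<longlongrightarrow> 0) (at a)"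
    by metis
  \<comment> \<open>\<open>(w - a) ^ M * poly Q (S w) \<rightarrow> 0\<close> at every pole \<open>a\<close>, so \<open>D\<close> clears all poles of \<open>E\<close>.\<close>
  define M where "M = Suc (\<Sum>a\<in>A. N a)"
  define D where "D = (\<lambda>w. \<Prod>b\<in>A. (w - b) ^ M)"
  define E where "E = (\<lambda>w. D w * (poly P w * poly Q (S w) - 1))"
  have E_lim: "(E \<longlongrightarrow> 0) (at a)" if "a \<in> A" for a
  proof -
    define D' where "D' = (\<lambda>w. \<Prod>b\<in>A - {a}. (w - b) ^ M)"
    have E_eq: "E = (\<lambda>w. D' w * ((w - a) ^ M * poly Q (S w) * poly P w - (w - a) ^ M))"
      using assms(3) that by (simp add: fun_eq_iff E_def D_def D'_def prod.remove algebra_simps)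
    have "((\<lambda>w. (w - a) ^ M * poly Q (S w)) \<longlongrightarrow> 0) (at a)"
      by (rule N[OF that]) (use member_le_sum[OF that _ assms(3), of N] in \<open>simp add: M_def\<close>)
    then have "(E \<longlongrightarrow> D' a * (0 * poly P a - (a - a) ^ M)) (at a)"
      unfolding E_eq D'_def by (intro tendsto_intros)
    then show ?thesis
      by (simp add: M_def)
  qed
  have E_holo: "E holomorphic_on \<Omega> - A"
    unfolding E_def D_def by (intro holomorphic_intros assms(5))
  have E_cont: "continuous_on (closure \<Omega> - A) E"
    unfolding E_def D_def by (intro continuous_intros) (rule assms(7))
  have G_holo: "(\<lambda>w. if w \<in> A then 0 else E w) holomorphic_on \<Omega>"
    by (rule holomorphic_on_zero_extension[OF assms(1,3) E_holo E_lim])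
  have G_cont: "continuous_on (closure \<Omega>) (\<lambda>w. if w \<in> A then 0 else E w)"
    using assms(1,3,4) E_cont G_holo by (rule continuous_on_closure_zero_extension)
  have "(if w \<in> A then 0 else E w) = 0" if "w \<in> frontier \<Omega>" for w
  proof -
    have "poly Q (S w) = cnj (poly P w)"
      unfolding Q_def assms(8)[OF that] by (rule poly_cnj[symmetric])
    then have "poly P w * poly Q (S w) = of_real ((norm (poly P w))\<^sup>2)"
      by (simp only: complex_norm_square)
    then show ?thesis
      using assms(9)[OF that] by (simp add: E_def)
  qed
  then have "(if z \<in> A then 0 else E z) = 0"
    using holomorphic_eq_0_if_eq_0_on_frontier[OF assms(1,2) G_holo G_cont] assms(10) by blast
  then have "E z = 0"
    using assms(10) by simp
  moreover have "D z \<noteq> 0"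
    using assms(3,10) by (auto simp: D_def)
  ultimately show ?thesis
    by (simp add: E_def Q_def)
qed

lemma order_ge_degree_at_pole:
  fixes P Q :: "complex poly"
  assumes "S holomorphic_on U - {a}" "open U" "a \<in> U" "is_pole S a"
    and "P \<noteq> 0" "Q \<noteq> 0" "\<And>w. w \<in> U - {a} \<Longrightarrow> poly P w * poly Q (S w) = 1"
  shows "degree Q \<le> order a P"
proof -
  define n where "n = degree Q"
  define l where "l = norm (lead_coeff Q) / 2"
  have "l > 0"
    using assms(6) by (simp add: l_def)
  obtain c where "c > 0" and S_ge: "\<forall>\<^sub>F w in at a. c / norm (w - a) \<le> norm (S w)"
    using pole_norm_ge[OF assms(1-4)] .
  have "filterlim S at_infinity (at a)"
    using assms(4) unfolding is_pole_def .
  with poly_norm_ge_at_infinity[OF assms(6)]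
  have Q_ge: "\<forall>\<^sub>F w in at a. l * norm (S w) ^ n \<le> norm (poly Q (S w))"
    unfolding l_def n_def by (rule eventually_compose_filterlim)
  have "\<forall>\<^sub>F w in at a. norm (poly P w) \<le> 1 / (l * c ^ n) * norm (w - a) ^ n"
    using S_ge Q_ge eventually_at_in_open[OF assms(2,3)]
  proof eventually_elim
    case (elim w)
    have "norm (w - a) > 0"
      using elim(3) by simp
    have "l * (c / norm (w - a)) ^ n \<le> norm (poly Q (S w))"
      using elim(1,2) \<open>l > 0\<close> \<open>c > 0\<close> \<open>norm (w - a) > 0\<close>
      by (meson order_trans mult_left_mono power_mono less_imp_le divide_nonneg_pos)
    moreover have "norm (poly P w) * norm (poly Q (S w)) = 1"
      using assms(7)[OF elim(3)] by (metis norm_mult norm_one)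
    ultimately have "norm (poly P w) * (l * (c / norm (w - a)) ^ n) \<le> 1"
      by (metis mult_left_mono norm_ge_zero)
    then show ?case
      using \<open>l > 0\<close> \<open>c > 0\<close> \<open>norm (w - a) > 0\<close>
      by (simp add: power_divide field_simps)
  qed
  then show ?thesis
    unfolding n_def by (rule order_ge_of_norm_bound[OF assms(5)])
qed

theorem theorem4p2:
  fixes P :: "complex poly"
  assumes "lead_coeff P = 1"
    and "degree P \<ge> 1"
    and "jordan_domain {z. cmod (poly P z) < 1}"
    and "quadrature_domain {z. cmod (poly P z) < 1}"
  shows "\<exists>c r. r > 0 \<and> {z. cmod (poly P z) < 1} = ball c r"
proof -
  define \<Omega> where "\<Omega> = {z. cmod (poly P z) < 1}"
  have "degree P > 0"
    using assms(2) by simp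
  have "open \<Omega>"
    unfolding \<Omega>_def by (intro open_Collect_less continuous_intros)
  have "bounded \<Omega>"
    unfolding \<Omega>_def using \<open>degree P > 0\<close> by (rule bounded_poly_sublevel)
  have "continuous_on UNIV (\<lambda>z. norm (poly P z))"
    by (intro continuous_intros)
  then have frontier: "\<And>z. z \<in> frontier \<Omega> \<Longrightarrow> norm (poly P z) = 1"
    unfolding \<Omega>_def using frontier_sublevel_subset by blast
  obtain S A where A: "finite A" "A \<subseteq> \<Omega>" and S: "S holomorphic_on \<Omega> - A" "\<forall>a\<in>A. is_pole S a"
    "continuous_on (closure \<Omega> - A) S" "\<forall>z\<in>frontier \<Omega>. S z = cnj z"
    using assms(4) unfolding quadrature_domain_def \<Omega>_def[symmetric] by blast
  note identity = schwarz_function_poly_identity[OF \<open>open \<Omega>\<close> \<open>bounded \<Omega>\<close> A S(1) _ S(3) _ frontier]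
  obtain a where "poly P a = 0"
    using alg_closed_imp_poly_has_root[OF \<open>degree P > 0\<close>] by blast
  then have "a \<in> A"
    using identity[of a] S by (force simp: \<Omega>_def)
  have "degree (map_poly cnj P) \<le> order a P"
  proof (rule order_ge_degree_at_pole[of S "\<Omega> - (A - {a})" a])
    show "open (\<Omega> - (A - {a}))"
      using \<open>open \<Omega>\<close> A(1) by (intro open_Diff finite_imp_closed) auto
    show "S holomorphic_on \<Omega> - (A - {a}) - {a}"
      using S(1) by (rule holomorphic_on_subset) auto
  qed (use \<open>a \<in> A\<close> \<open>degree P > 0\<close> A S identity in \<open>auto simp: map_poly_eq_0_iff\<close>)
  then have "P = [:- a, 1:] ^ degree P"
    using assms(1) by (intro monic_eq_linear_power_if_degree_le_order) (simp_all add: degree_map_poly)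
  then have "\<Omega> = ball a 1"
    using sublevel_linear_power_eq_ball[OF \<open>degree P > 0\<close>, of a] by (simp add: \<Omega>_def)
  then show ?thesis
    unfolding \<Omega>_def by (intro exI[of _ a] exI[of _ 1]) simp
qed

end
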